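(* Let $\mathcal{X}=\mathcal{X}^{(1)}\times\cdots\times\mathcal{X}^{(d)}$ with each $\mathcal{X}^{(j)}$ finite, $G$ an undirected graph on $\{1,\dots,d\}$ and $(C_i)_{i=1}^n$ cliques of $G$ (possibly overlapping) with $\bigcup_iC_i=\{1,\dots,d\}$. Let $\pi\in\mathcal{P}(\mathcal{X})$ be positive, $P\in\mathcal{L}(\mathcal{X})$, and let $M\in\mathcal{L}(\mathcal{X})$ be $(C_i)_{i=1}^n$-factorizable with respect to $G$ and $(L_i)_{i=1}^n$, $L_i\in\mathcal{L}(\mathcal{X}^{(C_i)})$. If $Z(x,(L_i)_{i=1}^n)\ge Z(x,(P^{(C_i)}_\pi)_{i=1}^n)$ for all $x\in\mathcal{X}$, then $D^\pi_{KL}(P\|M)\ge D^\pi_{KL}(P\|\mathbf{P}_\pi)+\sum_{i=1}^nD^{\pi^{(C_i)}}_{KL}(P^{(C_i)}_\pi\|L_i)$. Consequently $\mathbf{P}_\pi$ is the unique minimizer of $D^\pi_{KL}(P\|M)$ over all $(C_i)$-factorizable $M$ (w.r.t. $G$ and some $(L_i)$) with $Z(x,(L_i)_{i=1}^n)\ge Z(x,(P^{(C_i)}_\pi)_{i=1}^n)$ for all $x$, with minimum value $D^\pi_{KL}(P\|\mathbf{P}_\pi)$.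
   Context: $D_{KL}^{\pi}(M\|L):=\sum_{x,y}\pi(x)M(x,y)\ln\frac{M(x,y)}{L(x,y)}$. A clique of $G$ is a vertex set any two of whose elements are joined by an edge. For $C\subseteq\{1,\dots,d\}$: $\mathcal{X}^{(C)}=\prod_{j\in C}\mathcal{X}^{(j)}$, $x^{(C)}=(x^j)_{j\in C}$, $\pi^{(C)}(x^{(C)})=\sum_{x^{(-C)}}\pi(x)$, $P^{(C)}_\pi(x^{(C)},y^{(C)}):=\frac{\sum_{x^{(-C)},y^{(-C)}}\pi(x)P(x,y)}{\pi^{(C)}(x^{(C)})}$. $M$ is $(C_i)_{i=1}^n$-factorizable w.r.t. $G$ and $(L_i)$ if $M(x,y)=\frac{1}{Z(x,(L_i)_{i=1}^n)}\prod_{i=1}^nL_i(x^{(C_i)},y^{(C_i)})$ with $Z(x,(L_i)_{i=1}^n):=\sum_{y\in\mathcal{X}}\prod_{i=1}^nL_i(x^{(C_i)},y^{(C_i)})$. $\mathbf{P}_\pi(x,y):=\frac{1}{Z(x,(P^{(C_i)}_\pi)_{i=1}^n)}\prod_{i=1}^nP^{(C_i)}_\pi(x^{(C_i)},y^{(C_i)})$. *)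

theory Defs
  imports "HOL-Analysis.Analysis" "HOL-Library.Extended_Real"
begin

text \<open>States of X = X(1) x ... x X(d) are extensional functions on the index set
  I = {1..d}; the state space is PiE I S. For C a subset of I, x restricted to C
  (restrict x C) is the element x^(C) of X^(C) = PiE C S.\<close>

definition prob_dist :: "'s set \<Rightarrow> ('s \<Rightarrow> real) \<Rightarrow> bool" where
  "prob_dist A p \<longleftrightarrow> (\<forall>x\<in>A. p x \<ge> 0) \<and> sum p A = 1"

definition markov :: "'s set \<Rightarrow> ('s \<Rightarrow> 's \<Rightarrow> real) \<Rightarrow> bool" where
  "markov A K \<longleftrightarrow> (\<forall>x\<in>A. (\<forall>y\<in>A. K x y \<ge> 0) \<and> sum (K x) A = 1)"

definition kl_term :: "real \<Rightarrow> real \<Rightarrow> ereal" where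
  "kl_term m l = (if m = 0 then 0 else if l = 0 then \<infinity> else ereal (m * ln (m / l)))"

definition KL :: "'s set \<Rightarrow> ('s \<Rightarrow> real) \<Rightarrow> ('s \<Rightarrow> 's \<Rightarrow> real) \<Rightarrow> ('s \<Rightarrow> 's \<Rightarrow> real) \<Rightarrow> ereal" where
  "KL A p M L = (\<Sum>x\<in>A. \<Sum>y\<in>A. ereal (p x) * kl_term (M x y) (L x y))"

definition marg :: "nat set \<Rightarrow> (nat \<Rightarrow> 'a set) \<Rightarrow> nat set \<Rightarrow> ((nat \<Rightarrow> 'a) \<Rightarrow> real)
    \<Rightarrow> (nat \<Rightarrow> 'a) \<Rightarrow> real" where
  "marg I S C p xc = (\<Sum>x\<in>{x \<in> PiE I S. restrict x C = xc}. p x)"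

definition marg_kernel :: "nat set \<Rightarrow> (nat \<Rightarrow> 'a set) \<Rightarrow> nat set \<Rightarrow> ((nat \<Rightarrow> 'a) \<Rightarrow> real)
    \<Rightarrow> ((nat \<Rightarrow> 'a) \<Rightarrow> (nat \<Rightarrow> 'a) \<Rightarrow> real) \<Rightarrow> (nat \<Rightarrow> 'a) \<Rightarrow> (nat \<Rightarrow> 'a) \<Rightarrow> real" where
  "marg_kernel I S C p P xc yc =
     (\<Sum>x\<in>{x \<in> PiE I S. restrict x C = xc}. \<Sum>y\<in>{y \<in> PiE I S. restrict y C = yc}. p x * P x y)
       / marg I S C p xc"

definition Zf :: "nat set \<Rightarrow> (nat \<Rightarrow> 'a set) \<Rightarrow> nat \<Rightarrow> (nat \<Rightarrow> nat set)
    \<Rightarrow> (nat \<Rightarrow> (nat \<Rightarrow> 'a) \<Rightarrow> (nat \<Rightarrow> 'a) \<Rightarrow> real) \<Rightarrow> (nat \<Rightarrow> 'a) \<Rightarrow> real" where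
  "Zf I S n C L x = (\<Sum>y\<in>PiE I S. \<Prod>i\<in>{1..n}. L i (restrict x (C i)) (restrict y (C i)))"

definition clique :: "(nat \<Rightarrow> nat \<Rightarrow> bool) \<Rightarrow> nat set \<Rightarrow> bool" where
  "clique E K \<longleftrightarrow> (\<forall>j\<in>K. \<forall>k\<in>K. j \<noteq> k \<longrightarrow> E j k)"

definition factorizable :: "nat set \<Rightarrow> (nat \<Rightarrow> 'a set) \<Rightarrow> (nat \<Rightarrow> nat \<Rightarrow> bool) \<Rightarrow> nat
    \<Rightarrow> (nat \<Rightarrow> nat set) \<Rightarrow> (nat \<Rightarrow> (nat \<Rightarrow> 'a) \<Rightarrow> (nat \<Rightarrow> 'a) \<Rightarrow> real)
    \<Rightarrow> ((nat \<Rightarrow> 'a) \<Rightarrow> (nat \<Rightarrow> 'a) \<Rightarrow> real) \<Rightarrow> bool" where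
  "factorizable I S E n C L M \<longleftrightarrow>
     (\<forall>i\<in>{1..n}. C i \<subseteq> I \<and> clique E (C i)) \<and>
     (\<forall>x\<in>PiE I S. \<forall>y\<in>PiE I S.
        M x y = (\<Prod>i\<in>{1..n}. L i (restrict x (C i)) (restrict y (C i))) / Zf I S n C L x)"

definition proj_kernel :: "nat set \<Rightarrow> (nat \<Rightarrow> 'a set) \<Rightarrow> nat \<Rightarrow> (nat \<Rightarrow> nat set)
    \<Rightarrow> ((nat \<Rightarrow> 'a) \<Rightarrow> real) \<Rightarrow> ((nat \<Rightarrow> 'a) \<Rightarrow> (nat \<Rightarrow> 'a) \<Rightarrow> real)
    \<Rightarrow> (nat \<Rightarrow> 'a) \<Rightarrow> (nat \<Rightarrow> 'a) \<Rightarrow> real" where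
  "proj_kernel I S n C p P x y =
     (\<Prod>i\<in>{1..n}. marg_kernel I S (C i) p P (restrict x (C i)) (restrict y (C i)))
       / Zf I S n C (\<lambda>i. marg_kernel I S (C i) p P) x"

end

theory Submission
  imports Defs
begin

text \<open>Write Q_i for P_pi^(C_i). Where P(x,y) > 0, the logarithm of a normalized product splits
  into a sum, giving ln (P/M) = ln (P/P_pi) + sum_i ln (Q_i/L_i) + ln (Z_L(x)/Z_Q(x)).
  Averaged against pi(x) P(x,y), the i-th middle term only sees the C_i-coordinates and therefore
  averages to the marginal divergence of Q_i from L_i, while the last term is nonnegative because
  Z_L >= Z_Q. If instead some L_i vanishes where Q_i does not, then M vanishes somewhere on the
  support of P and the left-hand side is infinite. In the equality case every marginal divergence
  vanishes, so L_i = Q_i by Gibbs' inequality, and then M = P_pi.\<close>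

text \<open>Real-valued version of kl_term; for l = 0 < m its value is junk (m / 0 = 0), so it only
  agrees with kl_term under absolute continuity.\<close>
definition kl_term_real :: "real \<Rightarrow> real \<Rightarrow> real" where
  "kl_term_real m l = (if m = 0 then 0 else m * ln (m / l))"

definition KL_real :: "'s set \<Rightarrow> ('s \<Rightarrow> real) \<Rightarrow> ('s \<Rightarrow> 's \<Rightarrow> real)
    \<Rightarrow> ('s \<Rightarrow> 's \<Rightarrow> real) \<Rightarrow> real" where
  "KL_real A q M L = (\<Sum>x\<in>A. \<Sum>y\<in>A. q x * kl_term_real (M x y) (L x y))"

definition abs_continuous :: "'s set \<Rightarrow> ('s \<Rightarrow> 's \<Rightarrow> real) \<Rightarrow> ('s \<Rightarrow> 's \<Rightarrow> real)
    \<Rightarrow> bool" where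
  "abs_continuous A M L \<longleftrightarrow> (\<forall>x\<in>A. \<forall>y\<in>A. M x y \<noteq> 0 \<longrightarrow> L x y \<noteq> 0)"

lemma markov_nonneg: "markov A K \<Longrightarrow> x \<in> A \<Longrightarrow> y \<in> A \<Longrightarrow> 0 \<le> K x y"
  by (simp add: markov_def)

lemma markov_row_sum: "markov A K \<Longrightarrow> x \<in> A \<Longrightarrow> sum (K x) A = 1"
  by (simp add: markov_def)

lemma KL_eq_KL_real:
  assumes "abs_continuous A M L"
  shows "KL A q M L = ereal (KL_real A q M L)"
proof -
  have "KL A q M L = (\<Sum>x\<in>A. \<Sum>y\<in>A. ereal (q x * kl_term_real (M x y) (L x y)))"
    using assms unfolding KL_def kl_term_def kl_term_real_def abs_continuous_def
    by (intro sum.cong refl) auto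
  then show ?thesis unfolding KL_real_def by simp
qed

lemma KL_eq_infinity:
  assumes "finite A" "x \<in> A" "y \<in> A" "q x > 0" "M x y \<noteq> 0" "L x y = 0"
  shows "KL A q M L = \<infinity>"
proof -
  have "(\<Sum>y\<in>A. ereal (q x) * kl_term (M x y) (L x y)) = \<infinity>"
    unfolding sum_Pinfty using assms by (auto simp: kl_term_def intro!: bexI[of _ y])
  then show ?thesis unfolding KL_def sum_Pinfty using assms by auto
qed

lemma kl_term_real_ge_diff:
  assumes "0 \<le> m" "0 \<le> l" "m \<noteq> 0 \<Longrightarrow> l \<noteq> 0"
  shows "m - l \<le> kl_term_real m l"
proof (cases "m = 0")
  case False
  then have "m > 0" "l > 0" using assms by auto
  then have "m * ln (l / m) \<le> m * (l / m - 1)" by (intro mult_left_mono ln_le_minus_one) auto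
  moreover have "kl_term_real m l = - (m * ln (l / m))" "m * (l / m - 1) = l - m"
    using \<open>m > 0\<close> \<open>l > 0\<close> by (simp_all add: kl_term_real_def ln_div field_simps)
  ultimately show ?thesis by linarith
qed (use assms in \<open>simp add: kl_term_real_def\<close>)

lemma kl_term_real_eq_diff_imp_eq:
  assumes "0 \<le> m" "0 \<le> l" "m \<noteq> 0 \<Longrightarrow> l \<noteq> 0" and "kl_term_real m l = m - l"
  shows "m = l"
proof (cases "m = 0")
  case False
  then have "m > 0" "l > 0" using assms by auto
  moreover have "kl_term_real m l = - (m * ln (l / m))" "m * (l / m - 1) = l - m"
    using \<open>m > 0\<close> \<open>l > 0\<close> by (simp_all add: kl_term_real_def ln_div field_simps)
  ultimately have "m * ln (l / m) = m * (l / m - 1)" using assms(4) by linarith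
  with \<open>m > 0\<close> have "ln (l / m) = l / m - 1" by simp
  then have "l / m = 1" using \<open>m > 0\<close> \<open>l > 0\<close> by (intro ln_eq_minus_one) auto
  with \<open>m > 0\<close> show ?thesis by simp
qed (use assms in \<open>simp add: kl_term_real_def\<close>)

lemma KL_real_eq_sum_excess:
  assumes "finite A" "markov A M" "markov A L"
  shows "KL_real A q M L = (\<Sum>x\<in>A. q x * (\<Sum>y\<in>A. kl_term_real (M x y) (L x y) - (M x y - L x y)))"
proof -
  have "(\<Sum>y\<in>A. M x y - L x y) = 0" if "x \<in> A" for x
    using assms that by (simp add: markov_def sum_subtractf)
  then show ?thesis
    unfolding KL_real_def by (simp add: sum_subtractf sum_distrib_left[symmetric])
qed

lemma kl_excess_nonneg:
  assumes "markov A M" "markov A L" "abs_continuous A M L"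
    and "x \<in> A" "y \<in> A"
  shows "0 \<le> kl_term_real (M x y) (L x y) - (M x y - L x y)"
  using kl_term_real_ge_diff[OF markov_nonneg[OF assms(1,4,5)] markov_nonneg[OF assms(2,4,5)]] assms(3-5)
  by (simp add: abs_continuous_def)

lemma KL_real_nonneg:
  assumes "finite A" "\<forall>x\<in>A. 0 \<le> q x" "markov A M" "markov A L"
    and "abs_continuous A M L"
  shows "0 \<le> KL_real A q M L"
  unfolding KL_real_eq_sum_excess[OF assms(1,3,4)]
  using assms(2) kl_excess_nonneg[OF assms(3-5)] by (intro sum_nonneg mult_nonneg_nonneg) simp_all

lemma KL_real_eq_0_imp_eq:
  assumes A: "finite A" and q: "\<forall>x\<in>A. 0 < q x" and M: "markov A M" and L: "markov A L"
    and dom: "abs_continuous A M L"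
    and KL0: "KL_real A q M L = 0" and x: "x \<in> A" and y: "y \<in> A"
  shows "M x y = L x y"
proof -
  define e where "e x y = kl_term_real (M x y) (L x y) - (M x y - L x y)" for x y
  have e_nonneg: "0 \<le> e x y" if "x \<in> A" "y \<in> A" for x y
    unfolding e_def using kl_excess_nonneg[OF M L dom that] .
  have row_nonneg: "0 \<le> q x * sum (e x) A" if "x \<in> A" for x
  proof (rule mult_nonneg_nonneg)
    show "0 \<le> q x" using q that by (simp add: less_imp_le)
    show "0 \<le> sum (e x) A" using e_nonneg that by (simp add: sum_nonneg)
  qed
  have "(\<Sum>x\<in>A. q x * sum (e x) A) = 0"
    using KL0 unfolding KL_real_eq_sum_excess[OF A M L] e_def .
  then have "q x * sum (e x) A = 0"
    using sum_nonneg_0[where f = "\<lambda>x. q x * sum (e x) A", OF A row_nonneg] x by blast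
  moreover have "q x \<noteq> 0" using q x by auto
  ultimately have "sum (e x) A = 0" by simp
  moreover have ex_nonneg: "0 \<le> e x y'" if "y' \<in> A" for y' using e_nonneg x that .
  ultimately have "e x y = 0" using sum_nonneg_0[where f = "e x", OF A ex_nonneg] y by blast
  then have "kl_term_real (M x y) (L x y) = M x y - L x y" unfolding e_def by simp
  moreover have "M x y \<noteq> 0 \<Longrightarrow> L x y \<noteq> 0" using dom x y unfolding abs_continuous_def by blast
  ultimately show ?thesis
    using kl_term_real_eq_diff_imp_eq[OF markov_nonneg[OF M x y] markov_nonneg[OF L x y]] by blast
qed

lemma KL_nonneg:
  assumes A: "finite A" and q: "\<forall>x\<in>A. 0 < q x" and M: "markov A M" and L: "markov A L"
  shows "0 \<le> KL A q M L"
proof (cases "abs_continuous A M L")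
  case True
  have "\<forall>x\<in>A. 0 \<le> q x" using q by (simp add: less_imp_le)
  then have "0 \<le> KL_real A q M L" using KL_real_nonneg[OF A _ M L True] by blast
  then show ?thesis unfolding KL_eq_KL_real[OF True] by simp
next
  case False
  then obtain x y where "x \<in> A" "y \<in> A" "M x y \<noteq> 0" "L x y = 0"
    unfolding abs_continuous_def by blast
  then have "KL A q M L = \<infinity>" using q by (intro KL_eq_infinity[OF A, of x y]) simp_all
  then show ?thesis by simp
qed

lemma KL_eq_0_imp_eq:
  assumes A: "finite A" and q: "\<forall>x\<in>A. 0 < q x" and M: "markov A M" and L: "markov A L"
    and KL0: "KL A q M L = 0" and x: "x \<in> A" and y: "y \<in> A"
  shows "M x y = L x y"
proof (cases "abs_continuous A M L")
  case True
  have "KL_real A q M L = 0" using KL0 unfolding KL_eq_KL_real[OF True] by simp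
  then show ?thesis by (rule KL_real_eq_0_imp_eq[OF A q M L True _ x y])
next
  case False
  then obtain x' y' where "x' \<in> A" "y' \<in> A" "M x' y' \<noteq> 0" "L x' y' = 0"
    unfolding abs_continuous_def by blast
  then have "KL A q M L = \<infinity>" using q by (intro KL_eq_infinity[OF A, of x' y']) simp_all
  with KL0 show ?thesis by simp
qed

lemma ln_div_normalized_prod:
  fixes u v :: "'i \<Rightarrow> real"
  assumes "finite K" "0 < a" "0 < z" "0 < w" "\<forall>i\<in>K. 0 < u i" "\<forall>i\<in>K. 0 < v i"
  shows "ln (a / (prod u K / z)) = ln (a / (prod v K / w)) + (\<Sum>i\<in>K. ln (v i) - ln (u i)) + ln (z / w)"
proof -
  have "ln (prod u K) = (\<Sum>i\<in>K. ln (u i))" "ln (prod v K) = (\<Sum>i\<in>K. ln (v i))"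
    using assms by (auto intro!: ln_prod)
  moreover have "0 < prod u K" "0 < prod v K" using assms by (auto intro!: prod_pos)
  ultimately show ?thesis
    using assms(2-4) by (simp add: ln_div ln_mult sum_subtractf)
qed

locale product_kernel =
  fixes I :: "nat set" and S :: "nat \<Rightarrow> 'a set"
    and p :: "(nat \<Rightarrow> 'a) \<Rightarrow> real" and P :: "(nat \<Rightarrow> 'a) \<Rightarrow> (nat \<Rightarrow> 'a) \<Rightarrow> real"
  assumes finite_I: "finite I" and finite_S: "\<And>j. j \<in> I \<Longrightarrow> finite (S j)"
    and PiE_nonempty: "PiE I S \<noteq> {}"
    and p_pos: "\<And>x. x \<in> PiE I S \<Longrightarrow> 0 < p x"
    and P_markov: "markov (PiE I S) P"
begin

abbreviation X :: "(nat \<Rightarrow> 'a) set" where "X \<equiv> PiE I S"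

lemma P_pos: "x \<in> X \<Longrightarrow> y \<in> X \<Longrightarrow> P x y \<noteq> 0 \<Longrightarrow> 0 < P x y"
  using markov_nonneg[OF P_markov] by (simp add: less_le)

definition fiber :: "nat set \<Rightarrow> (nat \<Rightarrow> 'a) \<Rightarrow> (nat \<Rightarrow> 'a) set" where
  "fiber D xc = {x \<in> X. restrict x D = xc}"

lemma finite_PiE_subset: "D \<subseteq> I \<Longrightarrow> finite (PiE D S)"
  using finite_I finite_S by (intro finite_PiE) (auto dest: finite_subset)

lemma finite_X: "finite X"
  using finite_PiE_subset by blast

lemma finite_fiber: "finite (fiber D xc)"
  using finite_X unfolding fiber_def by simp

lemma restrict_in_PiE: "D \<subseteq> I \<Longrightarrow> x \<in> X \<Longrightarrow> restrict x D \<in> PiE D S"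
  by (auto simp: PiE_iff)

lemma fiber_nonempty:
  assumes "D \<subseteq> I" "xc \<in> PiE D S"
  shows "fiber D xc \<noteq> {}"
proof -
  obtain x0 where x0: "x0 \<in> X" using PiE_nonempty by blast
  define x where "x j = (if j \<in> D then xc j else x0 j)" for j
  have "x \<in> X" "restrict x D = xc"
    using assms x0 unfolding x_def by (auto simp: PiE_iff extensional_def)
  then show ?thesis unfolding fiber_def by blast
qed

lemma sum_X_by_fibers:
  assumes "D \<subseteq> I"
  shows "sum f X = (\<Sum>xc\<in>PiE D S. sum f (fiber D xc))"
  unfolding fiber_def using assms restrict_in_PiE
  by (intro sum.group[symmetric, OF finite_X finite_PiE_subset]) auto

lemma marg_eq_sum_fiber: "marg I S D p xc = sum p (fiber D xc)"
  unfolding marg_def fiber_def ..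

lemma marg_pos:
  assumes "D \<subseteq> I" "xc \<in> PiE D S"
  shows "0 < marg I S D p xc"
  unfolding marg_eq_sum_fiber using fiber_nonempty[OF assms] finite_fiber p_pos
  by (intro sum_pos) (auto simp: fiber_def)

lemma marg_mult_marg_kernel:
  assumes "D \<subseteq> I" "xc \<in> PiE D S"
  shows "marg I S D p xc * marg_kernel I S D p P xc yc
    = (\<Sum>x\<in>fiber D xc. \<Sum>y\<in>fiber D yc. p x * P x y)"
  using marg_pos[OF assms] unfolding marg_kernel_def fiber_def by simp

lemma marg_kernel_nonneg: "0 \<le> marg_kernel I S D p P xc yc"
proof -
  have "0 \<le> p x" if "x \<in> X" for x using p_pos[OF that] by simp
  then show ?thesis
    unfolding marg_kernel_def marg_eq_sum_fiber using markov_nonneg[OF P_markov]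
    by (intro divide_nonneg_nonneg sum_nonneg mult_nonneg_nonneg) (auto simp: fiber_def)
qed

lemma marg_kernel_markov:
  assumes D: "D \<subseteq> I"
  shows "markov (PiE D S) (marg_kernel I S D p P)"
  unfolding markov_def
proof (intro ballI conjI)
  fix xc yc show "0 \<le> marg_kernel I S D p P xc yc" by (rule marg_kernel_nonneg)
next
  fix xc assume xc: "xc \<in> PiE D S"
  have "marg I S D p xc * sum (marg_kernel I S D p P xc) (PiE D S)
      = (\<Sum>yc\<in>PiE D S. \<Sum>x\<in>fiber D xc. \<Sum>y\<in>fiber D yc. p x * P x y)"
    by (simp add: sum_distrib_left marg_mult_marg_kernel[OF D xc])
  also have "\<dots> = (\<Sum>x\<in>fiber D xc. \<Sum>y\<in>X. p x * P x y)"
    by (subst sum.swap) (simp add: sum_X_by_fibers[OF D])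
  also have "\<dots> = (\<Sum>x\<in>fiber D xc. p x)"
    using markov_row_sum[OF P_markov] by (intro sum.cong) (auto simp: fiber_def sum_distrib_left[symmetric])
  finally show "sum (marg_kernel I S D p P xc) (PiE D S) = 1"
    using marg_pos[OF D xc] by (simp add: marg_eq_sum_fiber)
qed

lemma sum_restrict_eq_sum_marg_kernel:
  assumes D: "D \<subseteq> I"
  shows "(\<Sum>x\<in>X. \<Sum>y\<in>X. p x * P x y * h (restrict x D) (restrict y D))
    = (\<Sum>xc\<in>PiE D S. \<Sum>yc\<in>PiE D S. marg I S D p xc * marg_kernel I S D p P xc yc * h xc yc)"
proof -
  have "(\<Sum>x\<in>X. \<Sum>y\<in>X. p x * P x y * h (restrict x D) (restrict y D))
      = (\<Sum>xc\<in>PiE D S. \<Sum>x\<in>fiber D xc. \<Sum>yc\<in>PiE D S. \<Sum>y\<in>fiber D yc. p x * P x y * h xc yc)"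
    unfolding sum_X_by_fibers[OF D] by (intro sum.cong refl) (auto simp: fiber_def)
  also have "\<dots> = (\<Sum>xc\<in>PiE D S. \<Sum>yc\<in>PiE D S. \<Sum>x\<in>fiber D xc. \<Sum>y\<in>fiber D yc. p x * P x y * h xc yc)"
    by (intro sum.cong[OF refl] sum.swap)
  also have "\<dots> = (\<Sum>xc\<in>PiE D S. \<Sum>yc\<in>PiE D S. marg I S D p xc * marg_kernel I S D p P xc yc * h xc yc)"
    by (intro sum.cong refl) (simp add: marg_mult_marg_kernel[OF D] sum_distrib_right)
  finally show ?thesis .
qed

lemma marg_kernel_pos:
  assumes D: "D \<subseteq> I" and x: "x \<in> X" and y: "y \<in> X" and Pxy: "0 < P x y"
  shows "0 < marg_kernel I S D p P (restrict x D) (restrict y D)"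
proof -
  have pP_nonneg: "0 \<le> p x' * P x' y'" if "x' \<in> X" "y' \<in> X" for x' y'
    using p_pos[OF that(1)] markov_nonneg[OF P_markov that] by simp
  have x_fib: "x \<in> fiber D (restrict x D)" and y_fib: "y \<in> fiber D (restrict y D)"
    using x y unfolding fiber_def by auto
  have "0 < (\<Sum>y'\<in>fiber D (restrict y D). p x * P x y')"
    using p_pos[OF x] Pxy pP_nonneg x
    by (intro sum_pos2[OF finite_fiber y_fib]) (auto simp: fiber_def)
  then have "0 < (\<Sum>x'\<in>fiber D (restrict x D). \<Sum>y'\<in>fiber D (restrict y D). p x' * P x' y')"
    using pP_nonneg by (intro sum_pos2[OF finite_fiber x_fib] sum_nonneg) (auto simp: fiber_def)
  then have "0 < marg I S D p (restrict x D) * marg_kernel I S D p P (restrict x D) (restrict y D)"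
    by (simp add: marg_mult_marg_kernel[OF D restrict_in_PiE[OF D x]])
  then show ?thesis using marg_pos[OF D restrict_in_PiE[OF D x]] by (simp add: zero_less_mult_iff)
qed

lemma marg_kernel_nonzero_imp_ex:
  assumes "marg_kernel I S D p P xc yc \<noteq> 0"
  shows "\<exists>x\<in>X. \<exists>y\<in>X. restrict x D = xc \<and> restrict y D = yc \<and> P x y \<noteq> 0"
proof (rule ccontr)
  assume "\<not> ?thesis"
  then have "(\<Sum>x\<in>fiber D xc. \<Sum>y\<in>fiber D yc. p x * P x y) = 0"
    by (intro sum.neutral ballI) (auto simp: fiber_def)
  with assms show False unfolding marg_kernel_def fiber_def by simp
qed

lemma sum_log_marg_kernel_ratio:
  assumes D: "D \<subseteq> I"
    and dom: "abs_continuous (PiE D S) (marg_kernel I S D p P) K"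
  shows "(\<Sum>x\<in>X. \<Sum>y\<in>X. p x * P x y * (ln (marg_kernel I S D p P (restrict x D) (restrict y D))
            - ln (K (restrict x D) (restrict y D))))
    = KL_real (PiE D S) (marg I S D p) (marg_kernel I S D p P) K"
    (is "?lhs = _")
proof -
  let ?Q = "marg_kernel I S D p P"
  have "?lhs = (\<Sum>xc\<in>PiE D S. \<Sum>yc\<in>PiE D S. marg I S D p xc * ?Q xc yc * (ln (?Q xc yc) - ln (K xc yc)))"
    by (rule sum_restrict_eq_sum_marg_kernel[OF D])
  also have "\<dots> = KL_real (PiE D S) (marg I S D p) ?Q K"
    unfolding KL_real_def
  proof (intro sum.cong refl)
    fix xc yc assume "xc \<in> PiE D S" "yc \<in> PiE D S"
    then have "?Q xc yc * (ln (?Q xc yc) - ln (K xc yc)) = kl_term_real (?Q xc yc) (K xc yc)"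
      using dom by (auto simp: abs_continuous_def kl_term_real_def ln_div)
    then show "marg I S D p xc * ?Q xc yc * (ln (?Q xc yc) - ln (K xc yc))
        = marg I S D p xc * kl_term_real (?Q xc yc) (K xc yc)"
      by (simp add: mult.assoc)
  qed
  finally show ?thesis .
qed

end

locale marginal_projection = product_kernel +
  fixes n :: nat and C :: "nat \<Rightarrow> nat set"
  assumes C_subset: "\<And>i. i \<in> {1..n} \<Longrightarrow> C i \<subseteq> I"
begin

abbreviation Q :: "nat \<Rightarrow> (nat \<Rightarrow> 'a) \<Rightarrow> (nat \<Rightarrow> 'a) \<Rightarrow> real" where
  "Q i \<equiv> marg_kernel I S (C i) p P"

abbreviation proj :: "(nat \<Rightarrow> 'a) \<Rightarrow> (nat \<Rightarrow> 'a) \<Rightarrow> real" where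
  "proj \<equiv> proj_kernel I S n C p P"

definition product_form :: "(nat \<Rightarrow> (nat \<Rightarrow> 'a) \<Rightarrow> (nat \<Rightarrow> 'a) \<Rightarrow> real)
    \<Rightarrow> ((nat \<Rightarrow> 'a) \<Rightarrow> (nat \<Rightarrow> 'a) \<Rightarrow> real) \<Rightarrow> bool" where
  "product_form L M \<longleftrightarrow> (\<forall>x\<in>X. \<forall>y\<in>X.
     M x y = (\<Prod>i\<in>{1..n}. L i (restrict x (C i)) (restrict y (C i))) / Zf I S n C L x)"

lemma factorizable_imp_product_form: "factorizable I S E n C L M \<Longrightarrow> product_form L M"
  by (simp add: factorizable_def product_form_def)

lemma product_form_proj: "product_form Q proj"
  by (simp add: product_form_def proj_kernel_def)

lemma Q_pos:
  "i \<in> {1..n} \<Longrightarrow> x \<in> X \<Longrightarrow> y \<in> X \<Longrightarrow> 0 < P x y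
    \<Longrightarrow> 0 < Q i (restrict x (C i)) (restrict y (C i))"
  using marg_kernel_pos C_subset by blast

lemma Zf_marg_kernel_pos:
  assumes x: "x \<in> X"
  shows "0 < Zf I S n C Q x"
proof -
  have "\<exists>y\<in>X. P x y \<noteq> 0"
    using markov_row_sum[OF P_markov x] by (metis sum.neutral zero_neq_one)
  then obtain y where y: "y \<in> X" and Pxy: "0 < P x y" using P_pos[OF x] by blast
  have "0 < (\<Prod>i\<in>{1..n}. Q i (restrict x (C i)) (restrict y (C i)))"
    using Q_pos x y Pxy by (intro prod_pos) blast
  then show ?thesis
    unfolding Zf_def using marg_kernel_nonneg
    by (intro sum_pos2[OF finite_X y]) (auto intro: prod_nonneg)
qed

lemma proj_kernel_markov: "markov X proj"
  unfolding markov_def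
proof (intro ballI conjI)
  fix x y assume "x \<in> X" "y \<in> X"
  show "0 \<le> proj x y"
    unfolding proj_kernel_def using Zf_marg_kernel_pos[OF \<open>x \<in> X\<close>] marg_kernel_nonneg
    by (intro divide_nonneg_pos prod_nonneg) auto
next
  fix x assume "x \<in> X"
  then show "sum (proj x) X = 1"
    using Zf_marg_kernel_pos[OF \<open>x \<in> X\<close>]
    unfolding proj_kernel_def sum_divide_distrib[symmetric] by (simp add: Zf_def)
qed

lemma proj_kernel_pos:
  assumes "x \<in> X" "y \<in> X" "0 < P x y"
  shows "0 < proj x y"
  unfolding proj_kernel_def using Q_pos assms Zf_marg_kernel_pos[OF assms(1)]
  by (intro divide_pos_pos prod_pos) auto

lemma KL_proj_kernel: "KL X p P proj = ereal (KL_real X p P proj)"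
proof (rule KL_eq_KL_real, unfold abs_continuous_def, intro ballI impI)
  fix x y assume "x \<in> X" "y \<in> X" "P x y \<noteq> 0"
  then show "proj x y \<noteq> 0" using proj_kernel_pos P_pos by (simp add: less_imp_neq[symmetric])
qed

lemma KL_eq_infinity_if_not_abs_continuous:
  assumes M: "product_form L M" and i: "i \<in> {1..n}"
    and "Q i xc yc \<noteq> 0" and L0: "L i xc yc = 0"
  shows "KL X p P M = \<infinity>"
proof -
  obtain x y where x: "x \<in> X" and y: "y \<in> X"
    and restr: "restrict x (C i) = xc" "restrict y (C i) = yc" and Pxy: "P x y \<noteq> 0"
    using marg_kernel_nonzero_imp_ex assms(3) by blast
  have "(\<Prod>i\<in>{1..n}. L i (restrict x (C i)) (restrict y (C i))) = 0"
    using i L0 restr by (intro prod_zero) auto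
  then have "M x y = 0" using M x y unfolding product_form_def by simp
  then show ?thesis by (rule KL_eq_infinity[where q = p and M = P, OF finite_X x y p_pos[OF x] Pxy])
qed

lemma factor_pos:
  assumes L: "\<forall>i\<in>{1..n}. markov (PiE (C i) S) (L i)"
    and dom: "\<forall>i\<in>{1..n}. abs_continuous (PiE (C i) S) (Q i) (L i)"
    and "i \<in> {1..n}" "x \<in> X" "y \<in> X" "0 < P x y"
  shows "0 < L i (restrict x (C i)) (restrict y (C i))"
proof -
  have in_PiE: "restrict x (C i) \<in> PiE (C i) S" "restrict y (C i) \<in> PiE (C i) S"
    using restrict_in_PiE[OF C_subset] assms(3-5) by blast+
  have "Q i (restrict x (C i)) (restrict y (C i)) \<noteq> 0"
    using Q_pos[OF assms(3-6)] by simp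
  then have "L i (restrict x (C i)) (restrict y (C i)) \<noteq> 0"
    using dom assms(3) in_PiE unfolding abs_continuous_def by blast
  moreover have "0 \<le> L i (restrict x (C i)) (restrict y (C i))"
    using markov_nonneg[OF L[rule_format, OF assms(3)] in_PiE] .
  ultimately show ?thesis by simp
qed

lemma kl_term_real_product_form:
  assumes M: "product_form L M" and x: "x \<in> X" and y: "y \<in> X"
    and ZL_pos: "0 < Zf I S n C L x"
    and L_pos: "0 < P x y \<Longrightarrow> \<forall>i\<in>{1..n}. 0 < L i (restrict x (C i)) (restrict y (C i))"
  shows "kl_term_real (P x y) (M x y) = kl_term_real (P x y) (proj x y)
    + P x y * (\<Sum>i\<in>{1..n}. ln (Q i (restrict x (C i)) (restrict y (C i)))
                          - ln (L i (restrict x (C i)) (restrict y (C i))))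
    + P x y * ln (Zf I S n C L x / Zf I S n C Q x)"
proof (cases "P x y = 0")
  case False
  then have Pxy: "0 < P x y" using P_pos x y by blast
  have "ln (P x y / M x y) = ln (P x y / proj x y)
      + (\<Sum>i\<in>{1..n}. ln (Q i (restrict x (C i)) (restrict y (C i)))
                     - ln (L i (restrict x (C i)) (restrict y (C i))))
      + ln (Zf I S n C L x / Zf I S n C Q x)"
    unfolding proj_kernel_def M[unfolded product_form_def, rule_format, OF x y]
    using Q_pos[OF _ x y Pxy] L_pos[OF Pxy] Pxy ZL_pos Zf_marg_kernel_pos[OF x]
    by (intro ln_div_normalized_prod) auto
  then show ?thesis using False by (simp add: kl_term_real_def algebra_simps)
qed (simp add: kl_term_real_def)

lemma KL_real_pythagorean:
  assumes L: "\<forall>i\<in>{1..n}. markov (PiE (C i) S) (L i)"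
    and dom: "\<forall>i\<in>{1..n}. abs_continuous (PiE (C i) S) (Q i) (L i)"
    and M: "product_form L M" and ZL_pos: "\<forall>x\<in>X. 0 < Zf I S n C L x"
  shows "KL_real X p P M = KL_real X p P proj
      + (\<Sum>i\<in>{1..n}. KL_real (PiE (C i) S) (marg I S (C i) p) (Q i) (L i))
      + (\<Sum>x\<in>X. p x * ln (Zf I S n C L x / Zf I S n C Q x))"
proof -
  define h where "h i x y = ln (Q i (restrict x (C i)) (restrict y (C i)))
    - ln (L i (restrict x (C i)) (restrict y (C i)))" for i x y
  define c where "c x = ln (Zf I S n C L x / Zf I S n C Q x)" for x
  have pointwise: "p x * kl_term_real (P x y) (M x y) = p x * kl_term_real (P x y) (proj x y)
      + (\<Sum>i\<in>{1..n}. p x * P x y * h i x y) + p x * P x y * c x"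
    if xy: "x \<in> X" "y \<in> X" for x y
  proof -
    have "0 < P x y \<Longrightarrow> \<forall>i\<in>{1..n}. 0 < L i (restrict x (C i)) (restrict y (C i))"
      using factor_pos[OF L dom _ xy] by blast
    then show ?thesis
      using kl_term_real_product_form[OF M xy ZL_pos[rule_format, OF xy(1)]]
      unfolding h_def c_def by (simp add: algebra_simps sum_distrib_left)
  qed
  have "KL_real X p P M = KL_real X p P proj + (\<Sum>x\<in>X. \<Sum>y\<in>X. \<Sum>i\<in>{1..n}. p x * P x y * h i x y)
      + (\<Sum>x\<in>X. \<Sum>y\<in>X. p x * P x y * c x)"
    unfolding KL_real_def by (simp add: pointwise sum.distrib)
  also have "(\<Sum>x\<in>X. \<Sum>y\<in>X. \<Sum>i\<in>{1..n}. p x * P x y * h i x y)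
      = (\<Sum>i\<in>{1..n}. \<Sum>x\<in>X. \<Sum>y\<in>X. p x * P x y * h i x y)"
    by (subst sum.swap) (intro sum.cong refl sum.swap)
  also have "\<dots> = (\<Sum>i\<in>{1..n}. KL_real (PiE (C i) S) (marg I S (C i) p) (Q i) (L i))"
  proof (intro sum.cong refl)
    fix i assume i: "i \<in> {1..n}"
    show "(\<Sum>x\<in>X. \<Sum>y\<in>X. p x * P x y * h i x y) = KL_real (PiE (C i) S) (marg I S (C i) p) (Q i) (L i)"
      unfolding h_def using dom i by (intro sum_log_marg_kernel_ratio[OF C_subset[OF i]]) blast
  qed
  also have "(\<Sum>x\<in>X. \<Sum>y\<in>X. p x * P x y * c x) = (\<Sum>x\<in>X. p x * c x)"
  proof (intro sum.cong refl)
    fix x assume "x \<in> X"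
    have "(\<Sum>y\<in>X. p x * P x y * c x) = p x * c x * sum (P x) X"
      by (simp add: sum_distrib_left mult_ac)
    then show "(\<Sum>y\<in>X. p x * P x y * c x) = p x * c x"
      using markov_row_sum[OF P_markov \<open>x \<in> X\<close>] by simp
  qed
  finally show ?thesis unfolding c_def .
qed

lemma KL_ge_proj_plus_marginal_KL:
  assumes L: "\<forall>i\<in>{1..n}. markov (PiE (C i) S) (L i)" and M: "product_form L M"
    and Z_ge: "\<forall>x\<in>X. Zf I S n C Q x \<le> Zf I S n C L x"
  shows "KL X p P proj + (\<Sum>i\<in>{1..n}. KL (PiE (C i) S) (marg I S (C i) p) (Q i) (L i)) \<le> KL X p P M"
proof (cases "\<forall>i\<in>{1..n}. abs_continuous (PiE (C i) S) (Q i) (L i)")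
  case True
  have ZL_pos: "\<forall>x\<in>X. 0 < Zf I S n C L x"
    using Z_ge Zf_marg_kernel_pos by (meson less_le_trans)
  have "M x y \<noteq> 0" if xy: "x \<in> X" "y \<in> X" and "P x y \<noteq> 0" for x y
  proof -
    have "0 < (\<Prod>i\<in>{1..n}. L i (restrict x (C i)) (restrict y (C i))) / Zf I S n C L x"
      using factor_pos[OF L True _ xy P_pos[OF xy \<open>P x y \<noteq> 0\<close>]] ZL_pos xy
      by (intro divide_pos_pos prod_pos) auto
    then show ?thesis unfolding M[unfolded product_form_def, rule_format, OF xy] by linarith
  qed
  then have KL_M: "KL X p P M = ereal (KL_real X p P M)"
    by (intro KL_eq_KL_real, unfold abs_continuous_def) blast
  have KL_marg: "KL (PiE (C i) S) (marg I S (C i) p) (Q i) (L i)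
      = ereal (KL_real (PiE (C i) S) (marg I S (C i) p) (Q i) (L i))" if "i \<in> {1..n}" for i
    using True that by (intro KL_eq_KL_real) blast
  have "0 \<le> (\<Sum>x\<in>X. p x * ln (Zf I S n C L x / Zf I S n C Q x))"
    using p_pos Z_ge Zf_marg_kernel_pos
    by (intro sum_nonneg mult_nonneg_nonneg ln_ge_zero) (auto simp: less_imp_le)
  then show ?thesis
    using KL_real_pythagorean[OF L True M ZL_pos]
    by (simp add: KL_M KL_proj_kernel KL_marg)
next
  case False
  then obtain i xc yc where "i \<in> {1..n}" "Q i xc yc \<noteq> 0" "L i xc yc = 0"
    unfolding abs_continuous_def by blast
  then have "KL X p P M = \<infinity>" by (intro KL_eq_infinity_if_not_abs_continuous[OF M])
  then show ?thesis by simp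
qed

lemma marginal_KL_nonneg:
  assumes "markov (PiE (C i) S) K" "i \<in> {1..n}"
  shows "0 \<le> KL (PiE (C i) S) (marg I S (C i) p) (Q i) K"
  using assms C_subset marg_pos
  by (intro KL_nonneg finite_PiE_subset marg_kernel_markov) auto

lemma KL_eq_proj_imp_eq:
  assumes L: "\<forall>i\<in>{1..n}. markov (PiE (C i) S) (L i)" and M: "product_form L M"
    and Z_ge: "\<forall>x\<in>X. Zf I S n C Q x \<le> Zf I S n C L x"
    and eq: "KL X p P M = KL X p P proj" and x: "x \<in> X" and y: "y \<in> X"
  shows "M x y = proj x y"
proof -
  define D where "D i = KL (PiE (C i) S) (marg I S (C i) p) (Q i) (L i)" for i
  have D_nonneg: "0 \<le> D i" if "i \<in> {1..n}" for i
    unfolding D_def using L that marginal_KL_nonneg by blast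
  have "ereal (KL_real X p P proj) + sum D {1..n} \<le> ereal (KL_real X p P proj)"
    using KL_ge_proj_plus_marginal_KL[OF L M Z_ge] eq unfolding D_def KL_proj_kernel by simp
  moreover have "0 \<le> sum D {1..n}" using D_nonneg by (rule sum_nonneg)
  ultimately have "sum D {1..n} = 0" by (cases "sum D {1..n}") auto
  then have D0: "D i = 0" if "i \<in> {1..n}" for i
    using sum_nonneg_0[where f = D, OF finite_atLeastAtMost D_nonneg _ that] by blast
  have QL: "Q i xc yc = L i xc yc" if "i \<in> {1..n}" "xc \<in> PiE (C i) S" "yc \<in> PiE (C i) S" for i xc yc
    using D0[OF that(1)] L that C_subset marg_pos unfolding D_def
    by (intro KL_eq_0_imp_eq[where A = "PiE (C i) S"] finite_PiE_subset marg_kernel_markov) auto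
  have prod_eq: "(\<Prod>i\<in>{1..n}. L i (restrict x (C i)) (restrict y' (C i)))
      = (\<Prod>i\<in>{1..n}. Q i (restrict x (C i)) (restrict y' (C i)))" if "y' \<in> X" for y'
    using QL restrict_in_PiE[OF C_subset] x that by (intro prod.cong refl) auto
  then have "Zf I S n C L x = Zf I S n C Q x" unfolding Zf_def by (intro sum.cong refl)
  then show ?thesis
    unfolding M[unfolded product_form_def, rule_format, OF x y] proj_kernel_def prod_eq[OF y] by simp
qed

lemma proj_kernel_minimizes_KL:
  assumes L: "\<forall>i\<in>{1..n}. markov (PiE (C i) S) (L i)" and M: "factorizable I S E n C L M"
    and Z_ge: "\<forall>x\<in>X. Zf I S n C Q x \<le> Zf I S n C L x"
  shows "KL X p P proj \<le> KL X p P M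
    \<and> (KL X p P M = KL X p P proj \<longrightarrow> (\<forall>x\<in>X. \<forall>y\<in>X. M x y = proj x y))"
proof (intro conjI impI ballI)
  note hyps = L factorizable_imp_product_form[OF M] Z_ge
  have "0 \<le> (\<Sum>i\<in>{1..n}. KL (PiE (C i) S) (marg I S (C i) p) (Q i) (L i))"
    using L marginal_KL_nonneg by (intro sum_nonneg) blast
  then show "KL X p P proj \<le> KL X p P M"
    using KL_ge_proj_plus_marginal_KL[OF hyps] ereal_le_add_self order_trans by blast
  fix x y assume "KL X p P M = KL X p P proj" "x \<in> X" "y \<in> X"
  then show "M x y = proj x y" by (rule KL_eq_proj_imp_eq[OF hyps])
qed

end

theorem theorem2p28:
  fixes d n :: nat
    and S :: "nat \<Rightarrow> 'a set"
    and E :: "nat \<Rightarrow> nat \<Rightarrow> bool"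
    and C :: "nat \<Rightarrow> nat set"
    and p :: "(nat \<Rightarrow> 'a) \<Rightarrow> real"
    and P M :: "(nat \<Rightarrow> 'a) \<Rightarrow> (nat \<Rightarrow> 'a) \<Rightarrow> real"
    and L :: "nat \<Rightarrow> (nat \<Rightarrow> 'a) \<Rightarrow> (nat \<Rightarrow> 'a) \<Rightarrow> real"
  defines "X \<equiv> PiE {1..d} S"
  assumes fin: "\<forall>j\<in>{1..d}. finite (S j)"
    and E_sym: "\<forall>j k. E j k \<longrightarrow> E k j"
    and E_irrefl: "\<forall>j. \<not> E j j"
    and E_dom: "\<forall>j k. E j k \<longrightarrow> j \<in> {1..d} \<and> k \<in> {1..d}"
    and cover: "(\<Union>i\<in>{1..n}. C i) = {1..d}"
    and pi_dist: "prob_dist X p"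
    and pi_pos: "\<forall>x\<in>X. p x > 0"
    and P_markov: "markov X P"
    and M_markov: "markov X M"
    and L_markov: "\<forall>i\<in>{1..n}. markov (PiE (C i) S) (L i)"
    and M_fact: "factorizable {1..d} S E n C L M"
    and Z_ge: "\<forall>x\<in>X. Zf {1..d} S n C L x \<ge> Zf {1..d} S n C (\<lambda>i. marg_kernel {1..d} S (C i) p P) x"
  shows "KL X p P M \<ge> KL X p P (proj_kernel {1..d} S n C p P)
           + (\<Sum>i\<in>{1..n}. KL (PiE (C i) S) (marg {1..d} S (C i) p)
                              (marg_kernel {1..d} S (C i) p P) (L i))
    \<and> (markov X (proj_kernel {1..d} S n C p P)
       \<and> (\<forall>i\<in>{1..n}. markov (PiE (C i) S) (marg_kernel {1..d} S (C i) p P))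
       \<and> factorizable {1..d} S E n C (\<lambda>i. marg_kernel {1..d} S (C i) p P) (proj_kernel {1..d} S n C p P)
       \<and> (\<forall>M' L'. markov X M' \<and> (\<forall>i\<in>{1..n}. markov (PiE (C i) S) (L' i))
            \<and> factorizable {1..d} S E n C L' M'
            \<and> (\<forall>x\<in>X. Zf {1..d} S n C L' x \<ge> Zf {1..d} S n C (\<lambda>i. marg_kernel {1..d} S (C i) p P) x)
          \<longrightarrow> KL X p P M' \<ge> KL X p P (proj_kernel {1..d} S n C p P)
            \<and> (KL X p P M' = KL X p P (proj_kernel {1..d} S n C p P)
                 \<longrightarrow> (\<forall>x\<in>X. \<forall>y\<in>X. M' x y = proj_kernel {1..d} S n C p P x y))))"
proof -
  have C_subset: "\<forall>i\<in>{1..n}. C i \<subseteq> {1..d}" using M_fact by (simp add: factorizable_def)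
  have "X \<noteq> {}" using pi_dist by (auto simp: prob_dist_def)
  then interpret marginal_projection "{1..d}" S p P n C
    using fin pi_pos P_markov C_subset by unfold_locales (auto simp: X_def)
  have Q_markov: "\<forall>i\<in>{1..n}. markov (PiE (C i) S) (Q i)"
    using marg_kernel_markov C_subset by blast
  have proj_factorizable: "factorizable {1..d} S E n C Q proj"
    using M_fact product_form_proj unfolding factorizable_def product_form_def by blast
  have inequality: "KL X p P proj
      + (\<Sum>i\<in>{1..n}. KL (PiE (C i) S) (marg {1..d} S (C i) p) (Q i) (L i)) \<le> KL X p P M"
    unfolding X_def
    by (rule KL_ge_proj_plus_marginal_KL[OF L_markov factorizable_imp_product_form[OF M_fact]
          Z_ge[unfolded X_def]])
  have proj_markov: "markov X proj" unfolding X_def by (rule proj_kernel_markov)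
  have minimal: "\<forall>M' L'. markov X M' \<and> (\<forall>i\<in>{1..n}. markov (PiE (C i) S) (L' i))
      \<and> factorizable {1..d} S E n C L' M' \<and> (\<forall>x\<in>X. Zf {1..d} S n C Q x \<le> Zf {1..d} S n C L' x)
    \<longrightarrow> KL X p P proj \<le> KL X p P M'
      \<and> (KL X p P M' = KL X p P proj \<longrightarrow> (\<forall>x\<in>X. \<forall>y\<in>X. M' x y = proj x y))"
    unfolding X_def by (intro allI impI, elim conjE) (rule proj_kernel_minimizes_KL)
  show ?thesis by (intro conjI inequality proj_markov Q_markov proj_factorizable minimal)
qed

end
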